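(* Let $X$ and $Y$ be non-discrete Tychonoff spaces which both have $P$-number $\tau$, and suppose each of $X$ and $Y$ has a $\tau$-discrete basis of clopen sets (a base for the topology consisting of clopen sets that is a union of $\tau$ many discrete families). Then the $P$-number of $X\times Y$ is $\tau$, and $X\times Y$ has a $\tau$-discrete basis of clopen sets.
   Context: All spaces are Tychonoff. The $P$-number of a space $Z$ is $|Z|$ if $Z$ is discrete; otherwise it is the largest cardinal $\tau$ such that the intersection of any family of fewer than $\tau$ open subsets of $Z$ is open. A family of subsets of $Z$ is discrete if every point of $Z$ has a neighborhood meeting at most one member of the family. A $\tau$-discrete basis is a base of the form $\bigcup_{\alpha<\tau}\mathcal B_\alpha$ with each $\mathcal B_\alpha$ a discrete family. *)

theory Defs
  imports "HOL-Analysis.Analysis"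
begin

definition tychonoff_space :: "'a topology \<Rightarrow> bool" where
  "tychonoff_space X \<longleftrightarrow> completely_regular_space X \<and> t1_space X"

definition is_discrete_space :: "'a topology \<Rightarrow> bool" where
  "is_discrete_space X \<longleftrightarrow> (\<forall>x \<in> topspace X. openin X {x})"

text \<open>The P-number of X equals the cardinal |T|. For non-discrete X: every
  intersection of fewer than |T| open sets is open, and |T| is the largest such
  cardinal, i.e. the property fails for the successor cardinal of |T|: some family
  of at most |T| open sets has non-open intersection. The empty intersection is
  taken to be topspace X.\<close>
definition has_P_number :: "'a topology \<Rightarrow> 'c set \<Rightarrow> bool" where
  "has_P_number X T \<longleftrightarrow>
     (if is_discrete_space X then ordIso2 (card_of (topspace X)) (card_of T)
      else (\<forall>\<F>. (\<forall>U\<in>\<F>. openin X U) \<and> ordLess2 (card_of \<F>) (card_of T) \<longrightarrow> openin X (topspace X \<inter> \<Inter>\<F>))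
         \<and> (\<exists>\<F>. (\<forall>U\<in>\<F>. openin X U) \<and> ordLeq3 (card_of \<F>) (card_of T) \<and> \<not> openin X (topspace X \<inter> \<Inter>\<F>)))"

definition discrete_family :: "'a topology \<Rightarrow> 'a set set \<Rightarrow> bool" where
  "discrete_family X \<A> \<longleftrightarrow>
     (\<forall>x \<in> topspace X. \<exists>N. openin X N \<and> x \<in> N \<and>
        (\<forall>A\<in>\<A>. \<forall>B\<in>\<A>. A \<inter> N \<noteq> {} \<and> B \<inter> N \<noteq> {} \<longrightarrow> A = B))"

definition is_base :: "'a topology \<Rightarrow> 'a set set \<Rightarrow> bool" where
  "is_base X \<B> \<longleftrightarrow> (\<forall>B\<in>\<B>. openin X B) \<and>
     (\<forall>U x. openin X U \<and> x \<in> U \<longrightarrow> (\<exists>B\<in>\<B>. x \<in> B \<and> B \<subseteq> U))"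

definition has_discrete_clopen_basis :: "'a topology \<Rightarrow> 'c set \<Rightarrow> bool" where
  "has_discrete_clopen_basis X T \<longleftrightarrow>
     (\<exists>\<B> :: 'c \<Rightarrow> 'a set set. (\<forall>\<alpha>\<in>T. discrete_family X (\<B> \<alpha>)) \<and>
        is_base X (\<Union>\<alpha>\<in>T. \<B> \<alpha>) \<and>
        (\<forall>B \<in> (\<Union>\<alpha>\<in>T. \<B> \<alpha>). openin X B \<and> closedin X B))"

end

theory Submission
  imports Defs
begin

text \<open>Everything is checked on open rectangles. A point of an intersection of fewer than
  \<open>\<tau>\<close> open sets of \<open>X \<times> Y\<close> has, for each member, a rectangle inside it; the intersections of
  the sides are open in the factors, so their product is an open neighbourhood of the
  point inside the intersection, while a non-open intersection \<open>\<Inter>\<F>\<close> in \<open>X\<close> gives the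
  non-open intersection \<open>(\<Inter>\<F>) \<times> Y\<close>. Products of members of a discrete family of \<open>X\<close> with
  members of one of \<open>Y\<close> form a discrete family, and since the \<open>P\<close>-number \<open>\<tau>\<close> is infinite
  the \<open>\<tau> \<times> \<tau>\<close> such families can be reindexed by \<open>\<tau>\<close>.\<close>

definition small_intersections_open :: "'a topology \<Rightarrow> 'c set \<Rightarrow> bool" where
  "small_intersections_open X T \<longleftrightarrow>
     (\<forall>\<F>. (\<forall>U\<in>\<F>. openin X U) \<and> ordLess2 (card_of \<F>) (card_of T)
        \<longrightarrow> openin X (topspace X \<inter> \<Inter>\<F>))"

lemma has_P_number_nondiscrete_iff:
  assumes "\<not> is_discrete_space X"
  shows "has_P_number X T \<longleftrightarrow> small_intersections_open X T \<and>
     (\<exists>\<F>. (\<forall>U\<in>\<F>. openin X U) \<and> ordLeq3 (card_of \<F>) (card_of T) \<and> \<not> openin X (topspace X \<inter> \<Inter>\<F>))"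
  using assms unfolding has_P_number_def small_intersections_open_def by simp

lemma has_P_number_imp_infinite:
  assumes "\<not> is_discrete_space X" "has_P_number X T"
  shows "infinite T"
proof
  assume "finite T"
  from assms obtain \<F> where \<F>: "\<forall>U\<in>\<F>. openin X U" "ordLeq3 (card_of \<F>) (card_of T)"
      "\<not> openin X (topspace X \<inter> \<Inter>\<F>)"
    by (auto simp: has_P_number_nondiscrete_iff)
  have "finite \<F>" using \<F>(2) \<open>finite T\<close> card_of_ordLeq_finite by blast
  show False
  proof (cases "\<F> = {}")
    case True
    then show False using \<F>(3) by simp
  next
    case False
    then have "topspace X \<inter> \<Inter>\<F> = \<Inter>\<F>" using \<F>(1) openin_subset by blast
    moreover have "openin X (\<Inter>\<F>)" using False \<F>(1) \<open>finite \<F>\<close> by (intro openin_Inter) auto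
    ultimately show False using \<F>(3) by simp
  qed
qed

lemma not_discrete_space_prod_topology:
  assumes "\<not> is_discrete_space X" "\<not> is_discrete_space Y"
  shows "\<not> is_discrete_space (prod_topology X Y)"
proof
  assume discrete: "is_discrete_space (prod_topology X Y)"
  from assms(1) obtain x where x: "x \<in> topspace X" "\<not> openin X {x}"
    unfolding is_discrete_space_def by auto
  from assms(2) obtain y where y: "y \<in> topspace Y"
    unfolding is_discrete_space_def by auto
  have "openin (prod_topology X Y) ({x} \<times> {y})"
    using discrete x y unfolding is_discrete_space_def by auto
  then show False using x(2) by (metis insert_not_empty openin_prod_Times_iff)
qed

lemma small_intersections_open_prod_topology:
  assumes X: "small_intersections_open X T" and Y: "small_intersections_open Y T"
  shows "small_intersections_open (prod_topology X Y) T"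
  unfolding small_intersections_open_def
proof (intro allI impI)
  fix \<W> assume \<W>: "(\<forall>W\<in>\<W>. openin (prod_topology X Y) W) \<and> ordLess2 (card_of \<W>) (card_of T)"
  let ?I = "topspace (prod_topology X Y) \<inter> \<Inter>\<W>"
  show "openin (prod_topology X Y) ?I"
  proof (subst openin_subopen, intro ballI)
    fix z assume z: "z \<in> ?I"
    obtain x y where z_eq: "z = (x, y)" by (cases z)
    have "\<forall>W\<in>\<W>. \<exists>U V. openin X U \<and> openin Y V \<and> x \<in> U \<and> y \<in> V \<and> U \<times> V \<subseteq> W"
      using \<W> z z_eq by (auto simp: openin_prod_topology_alt)
    then obtain u v where uv: "\<And>W. W \<in> \<W> \<Longrightarrow>
        openin X (u W) \<and> openin Y (v W) \<and> x \<in> u W \<and> y \<in> v W \<and> u W \<times> v W \<subseteq> W"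
      by metis
    have "ordLess2 (card_of (u ` \<W>)) (card_of T)" "ordLess2 (card_of (v ` \<W>)) (card_of T)"
      using card_of_image \<W> ordLeq_ordLess_trans by blast+
    then have "openin X (topspace X \<inter> \<Inter>(u ` \<W>))" "openin Y (topspace Y \<inter> \<Inter>(v ` \<W>))"
      using X Y uv unfolding small_intersections_open_def by auto
    then have "openin (prod_topology X Y) ((topspace X \<inter> \<Inter>(u ` \<W>)) \<times> (topspace Y \<inter> \<Inter>(v ` \<W>)))"
      by (simp add: openin_prod_Times_iff)
    moreover have "z \<in> (topspace X \<inter> \<Inter>(u ` \<W>)) \<times> (topspace Y \<inter> \<Inter>(v ` \<W>))"
      using z z_eq uv by auto
    moreover have "(topspace X \<inter> \<Inter>(u ` \<W>)) \<times> (topspace Y \<inter> \<Inter>(v ` \<W>)) \<subseteq> ?I"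
    proof
      fix p assume p: "p \<in> (topspace X \<inter> \<Inter>(u ` \<W>)) \<times> (topspace Y \<inter> \<Inter>(v ` \<W>))"
      have "p \<in> W" if "W \<in> \<W>" for W
      proof -
        have "p \<in> u W \<times> v W" using p that by auto
        then show ?thesis using uv[OF that] by blast
      qed
      with p show "p \<in> ?I" by auto
    qed
    ultimately show "\<exists>V. openin (prod_topology X Y) V \<and> z \<in> V \<and> V \<subseteq> ?I"
      by blast
  qed
qed

lemma not_openin_Inter_prod_topology:
  assumes "\<not> openin X (topspace X \<inter> \<Inter>\<F>)" "topspace Y \<noteq> {}"
  shows "\<not> openin (prod_topology X Y)
           (topspace (prod_topology X Y) \<inter> \<Inter>((\<lambda>U. U \<times> topspace Y) ` \<F>))"
proof -
  have "topspace (prod_topology X Y) \<inter> \<Inter>((\<lambda>U. U \<times> topspace Y) ` \<F>)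
      = (topspace X \<inter> \<Inter>\<F>) \<times> topspace Y"
    by auto
  then show ?thesis
    using assms openin_prod_Times_iff by (metis openin_empty)
qed

lemma has_P_number_prod_topology:
  assumes "\<not> is_discrete_space X" "\<not> is_discrete_space Y"
    and "has_P_number X T" "has_P_number Y T"
  shows "has_P_number (prod_topology X Y) T"
proof -
  from assms(1,3) obtain \<F> where \<F>: "\<forall>U\<in>\<F>. openin X U" "ordLeq3 (card_of \<F>) (card_of T)"
      "\<not> openin X (topspace X \<inter> \<Inter>\<F>)"
    by (auto simp: has_P_number_nondiscrete_iff)
  define \<G> where "\<G> = (\<lambda>U. U \<times> topspace Y) ` \<F>"
  have "\<forall>W\<in>\<G>. openin (prod_topology X Y) W"
    using \<F>(1) by (auto simp: \<G>_def openin_prod_Times_iff)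
  moreover have "ordLeq3 (card_of \<G>) (card_of T)"
    unfolding \<G>_def using card_of_image \<F>(2) ordLeq_transitive by blast
  moreover have "topspace Y \<noteq> {}"
    using assms(2) unfolding is_discrete_space_def by auto
  then have "\<not> openin (prod_topology X Y) (topspace (prod_topology X Y) \<inter> \<Inter>\<G>)"
    unfolding \<G>_def using \<F>(3) by (rule not_openin_Inter_prod_topology[rotated])
  moreover have "small_intersections_open (prod_topology X Y) T"
    using assms by (intro small_intersections_open_prod_topology) (simp_all add: has_P_number_nondiscrete_iff)
  ultimately show ?thesis
    using not_discrete_space_prod_topology[OF assms(1,2)] has_P_number_nondiscrete_iff by blast
qed

lemma discrete_familyD:
  assumes "discrete_family X \<A>" "x \<in> topspace X"
  obtains N where "openin X N" "x \<in> N"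
    "\<And>A A'. \<lbrakk>A \<in> \<A>; A' \<in> \<A>; A \<inter> N \<noteq> {}; A' \<inter> N \<noteq> {}\<rbrakk> \<Longrightarrow> A = A'"
  using assms unfolding discrete_family_def by metis

lemma discrete_family_prod_topology:
  assumes \<A>: "discrete_family X \<A>" and \<B>: "discrete_family Y \<B>"
  shows "discrete_family (prod_topology X Y) {A \<times> B |A B. A \<in> \<A> \<and> B \<in> \<B>}"
  unfolding discrete_family_def
proof (intro ballI)
  fix z assume "z \<in> topspace (prod_topology X Y)"
  then obtain x y where z_eq: "z = (x, y)" and "x \<in> topspace X" "y \<in> topspace Y" by auto
  obtain N where N: "openin X N" "x \<in> N"
      "\<And>A A'. \<lbrakk>A \<in> \<A>; A' \<in> \<A>; A \<inter> N \<noteq> {}; A' \<inter> N \<noteq> {}\<rbrakk> \<Longrightarrow> A = A'"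
    using discrete_familyD[OF \<A> \<open>x \<in> topspace X\<close>] by blast
  obtain M where M: "openin Y M" "y \<in> M"
      "\<And>B B'. \<lbrakk>B \<in> \<B>; B' \<in> \<B>; B \<inter> M \<noteq> {}; B' \<inter> M \<noteq> {}\<rbrakk> \<Longrightarrow> B = B'"
    using discrete_familyD[OF \<B> \<open>y \<in> topspace Y\<close>] by blast
  have "openin (prod_topology X Y) (N \<times> M)" "z \<in> N \<times> M"
    using N M z_eq by (auto simp: openin_prod_Times_iff)
  moreover have "P = Q"
    if "P \<in> {A \<times> B |A B. A \<in> \<A> \<and> B \<in> \<B>}" "Q \<in> {A \<times> B |A B. A \<in> \<A> \<and> B \<in> \<B>}"
      "P \<inter> (N \<times> M) \<noteq> {}" "Q \<inter> (N \<times> M) \<noteq> {}" for P Q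
  proof -
    from that(1,2) obtain A B A' B' where
      PQ: "P = A \<times> B" "Q = A' \<times> B'" and "A \<in> \<A>" "B \<in> \<B>" "A' \<in> \<A>" "B' \<in> \<B>"
      by blast
    moreover have "A \<inter> N \<noteq> {}" "B \<inter> M \<noteq> {}" "A' \<inter> N \<noteq> {}" "B' \<inter> M \<noteq> {}"
      using that(3,4) unfolding PQ by auto
    ultimately show "P = Q"
      using N(3) M(3) by metis
  qed
  ultimately show "\<exists>W. openin (prod_topology X Y) W \<and> z \<in> W \<and>
      (\<forall>P\<in>{A \<times> B |A B. A \<in> \<A> \<and> B \<in> \<B>}. \<forall>Q\<in>{A \<times> B |A B. A \<in> \<A> \<and> B \<in> \<B>}.
         P \<inter> W \<noteq> {} \<and> Q \<inter> W \<noteq> {} \<longrightarrow> P = Q)"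
    by blast
qed

lemma is_base_prod_topology:
  assumes \<B>: "is_base X \<B>" and \<C>: "is_base Y \<C>"
  shows "is_base (prod_topology X Y) {B \<times> C |B C. B \<in> \<B> \<and> C \<in> \<C>}"
  unfolding is_base_def
proof (intro conjI allI impI ballI)
  fix D assume "D \<in> {B \<times> C |B C. B \<in> \<B> \<and> C \<in> \<C>}"
  then show "openin (prod_topology X Y) D"
    using \<B> \<C> unfolding is_base_def by (auto simp: openin_prod_Times_iff)
next
  fix W z assume W: "openin (prod_topology X Y) W \<and> z \<in> W"
  obtain x y where z_eq: "z = (x, y)" by (cases z)
  with W obtain U V where UV: "openin X U" "openin Y V" "x \<in> U" "y \<in> V" "U \<times> V \<subseteq> W"
    unfolding openin_prod_topology_alt by blast
  obtain B where B: "B \<in> \<B>" "x \<in> B" "B \<subseteq> U"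
    using \<B> UV(1,3) unfolding is_base_def by blast
  obtain C where C: "C \<in> \<C>" "y \<in> C" "C \<subseteq> V"
    using \<C> UV(2,4) unfolding is_base_def by blast
  have "B \<times> C \<subseteq> W"
    using B(3) C(3) UV(5) by blast
  with B C z_eq show "\<exists>D\<in>{B \<times> C |B C. B \<in> \<B> \<and> C \<in> \<C>}. z \<in> D \<and> D \<subseteq> W"
    by blast
qed

lemma UN_reindex_pairs:
  assumes "bij_betw f T (T \<times> T)"
  shows "(\<Union>\<gamma>\<in>T. {B \<times> C |B C. B \<in> \<B> (fst (f \<gamma>)) \<and> C \<in> \<C> (snd (f \<gamma>))})
       = {B \<times> C |B C. B \<in> (\<Union>\<alpha>\<in>T. \<B> \<alpha>) \<and> C \<in> (\<Union>\<beta>\<in>T. \<C> \<beta>)}"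
    (is "?L = ?R")
proof
  show "?L \<subseteq> ?R"
  proof
    fix D assume "D \<in> ?L"
    then obtain \<gamma> B C where "\<gamma> \<in> T" "D = B \<times> C"
        "B \<in> \<B> (fst (f \<gamma>))" "C \<in> \<C> (snd (f \<gamma>))"
      by blast
    moreover have "f \<gamma> \<in> T \<times> T"
      using assms calculation(1) bij_betwE by blast
    ultimately show "D \<in> ?R"
      by (auto simp: mem_Times_iff)
  qed
next
  show "?R \<subseteq> ?L"
  proof
    fix D assume "D \<in> ?R"
    then obtain B C \<alpha> \<beta> where "D = B \<times> C" "\<alpha> \<in> T" "B \<in> \<B> \<alpha>" "\<beta> \<in> T" "C \<in> \<C> \<beta>"
      by blast
    moreover have "(\<alpha>, \<beta>) \<in> f ` T"
      using assms calculation(2,4) by (simp add: bij_betw_def)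
    then obtain \<gamma> where "\<gamma> \<in> T" "f \<gamma> = (\<alpha>, \<beta>)"
      by auto
    ultimately have "D \<in> {B \<times> C |B C. B \<in> \<B> (fst (f \<gamma>)) \<and> C \<in> \<C> (snd (f \<gamma>))}"
      by auto
    with \<open>\<gamma> \<in> T\<close> show "D \<in> ?L"
      by blast
  qed
qed

lemma has_discrete_clopen_basis_prod_topology:
  fixes X :: "'a topology" and Y :: "'b topology" and T :: "'c set"
  assumes "infinite T"
    and "has_discrete_clopen_basis X T" "has_discrete_clopen_basis Y T"
  shows "has_discrete_clopen_basis (prod_topology X Y) T"
proof -
  from assms(2) obtain \<B> :: "'c \<Rightarrow> 'a set set" where
    \<B>: "\<forall>\<alpha>\<in>T. discrete_family X (\<B> \<alpha>)" "is_base X (\<Union>\<alpha>\<in>T. \<B> \<alpha>)"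
       "\<forall>B \<in> (\<Union>\<alpha>\<in>T. \<B> \<alpha>). openin X B \<and> closedin X B"
    unfolding has_discrete_clopen_basis_def by blast
  from assms(3) obtain \<C> :: "'c \<Rightarrow> 'b set set" where
    \<C>: "\<forall>\<beta>\<in>T. discrete_family Y (\<C> \<beta>)" "is_base Y (\<Union>\<beta>\<in>T. \<C> \<beta>)"
       "\<forall>C \<in> (\<Union>\<beta>\<in>T. \<C> \<beta>). openin Y C \<and> closedin Y C"
    unfolding has_discrete_clopen_basis_def by blast
  obtain f where f: "bij_betw f T (T \<times> T)"
    using card_of_Times_same_infinite[OF assms(1)] ordIso_symmetric card_of_ordIso by blast
  define \<D> where "\<D> \<gamma> = {B \<times> C |B C. B \<in> \<B> (fst (f \<gamma>)) \<and> C \<in> \<C> (snd (f \<gamma>))}" for \<gamma>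
  have "discrete_family (prod_topology X Y) (\<D> \<gamma>)" if "\<gamma> \<in> T" for \<gamma>
  proof -
    have "f \<gamma> \<in> T \<times> T"
      using f that bij_betwE by blast
    then show ?thesis
      unfolding \<D>_def using \<B>(1) \<C>(1)
      by (intro discrete_family_prod_topology) (auto simp: mem_Times_iff)
  qed
  moreover have UN_\<D>: "(\<Union>\<gamma>\<in>T. \<D> \<gamma>) = {B \<times> C |B C. B \<in> (\<Union>\<alpha>\<in>T. \<B> \<alpha>) \<and> C \<in> (\<Union>\<beta>\<in>T. \<C> \<beta>)}"
    unfolding \<D>_def by (rule UN_reindex_pairs[OF f])
  moreover have "is_base (prod_topology X Y) (\<Union>\<gamma>\<in>T. \<D> \<gamma>)"
    unfolding UN_\<D> using \<B>(2) \<C>(2) by (rule is_base_prod_topology)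
  moreover have "\<forall>D \<in> (\<Union>\<gamma>\<in>T. \<D> \<gamma>). openin (prod_topology X Y) D \<and> closedin (prod_topology X Y) D"
    unfolding UN_\<D> using \<B>(3) \<C>(3) by (auto simp: openin_prod_Times_iff closedin_prod_Times_iff)
  ultimately show ?thesis
    unfolding has_discrete_clopen_basis_def by blast
qed

theorem lemma2p2:
  fixes X :: "'a topology" and Y :: "'b topology" and T :: "'c set"
  assumes "tychonoff_space X" and "tychonoff_space Y"
    and "\<not> is_discrete_space X" and "\<not> is_discrete_space Y"
    and "has_P_number X T" and "has_P_number Y T"
    and "has_discrete_clopen_basis X T" and "has_discrete_clopen_basis Y T"
  shows "has_P_number (prod_topology X Y) T \<and> has_discrete_clopen_basis (prod_topology X Y) T"
proof
  show "has_P_number (prod_topology X Y) T"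
    using assms(3-6) by (rule has_P_number_prod_topology)
  have "infinite T"
    using assms(3,5) by (rule has_P_number_imp_infinite)
  then show "has_discrete_clopen_basis (prod_topology X Y) T"
    using assms(7,8) by (rule has_discrete_clopen_basis_prod_topology)
qed

end
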